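(* Let $q=p^f$ with $p$ prime, $n=q+1$, and let $\mathbf{A}\in\mathrm{GL}_n(q)$ be the matrix defined in the context. Let $\mathcal{C}$ be an $\langle\mathbf{A}\rangle$-irreducible linear $[n,k]_q$ code. Then either $k=2$, or $k=1$, $q$ is even and $\mathcal{C}$ is spanned by the vector $(1,1,\ldots,1)$. If further $\mathcal{C}$ is faithful, then $\langle\mathbf{A}\rangle$ acts regularly on the set of nonzero codewords of $\mathcal{C}$; in particular, $\mathcal{C}$ is an equidistant linear $[n,2]_q$ code of weight $q$.
   Context: A linear $[n,k]_q$ code is a $k$-dimensional subspace of the row space $\mathbb{F}_q^n$; the weight of a vector is its number of nonzero coordinates; a code is equidistant of weight $\omega$ if all nonzero codewords have weight $\omega$. Write the multiplicative group $\mathbb{F}_q^*=\langle\eta,\lambda\rangle$ where $\lambda$ has odd order and $\eta$ has order a power of $2$. Let $\mathbf{D}$ be the $n\times n$ diagonal matrix $\mathrm{diag}(\eta\lambda,\lambda,\eta\lambda,\ldots,\eta\lambda)$ (first entry $\eta\lambda$, second entry $\lambda$, remaining $n-2$ entries $\eta\lambda$), let $\mathbf{P}=\begin{pmatrix}\mathbf{0}' & \mathbf{I}_{n-1}\\ 1 & \mathbf{0}\end{pmatrix}$ (where $\mathbf{0}'$ is the zero column of length $n-1$ and $\mathbf{0}$ the zero row of length $n-1$), and $\mathbf{A}=\mathbf{D}\mathbf{P}$, acting on $\mathbb{F}_q^n$ by right multiplication of row vectors. A code $\mathcal{C}$ is $\langle\mathbf{A}\rangle$-invariant if $\mathbf{u}\mathbf{A}\in\mathcal{C}$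 for all $\mathbf{u}\in\mathcal{C}$; an $\langle\mathbf{A}\rangle$-invariant $[n,k]_q$ code is $\langle\mathbf{A}\rangle$-irreducible if it contains no $\langle\mathbf{A}\rangle$-invariant $[n,k']_q$ code with $1\leqslant k'<k$, and faithful if no nonidentity element of $\langle\mathbf{A}\rangle$ fixes $\mathcal{C}$ pointwise. *)

theory Defs
  imports Complex_Main "HOL-Library.Function_Algebras" "HOL-Library.Cardinality" "HOL-Computational_Algebra.Primes"
begin

text \<open>Row vectors of length n over a field are modelled as functions nat => 'a
  that vanish outside {0..<n}; n x n matrices as functions nat => nat => 'a
  vanishing outside {0..<n} x {0..<n}.\<close>

definition fscale :: "'a::field \<Rightarrow> (nat \<Rightarrow> 'a) \<Rightarrow> (nat \<Rightarrow> 'a)" where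
  "fscale c v = (\<lambda>i. c * v i)"

lemma vector_space_fscale: "vector_space (fscale :: 'a::field \<Rightarrow> _)"
  unfolding vector_space_def fscale_def by (auto simp: fun_eq_iff algebra_simps)

definition Fvecs :: "nat \<Rightarrow> (nat \<Rightarrow> 'a::zero) set" where
  "Fvecs n = {v. \<forall>i\<ge>n. v i = 0}"

definition wt :: "nat \<Rightarrow> (nat \<Rightarrow> 'a::zero) \<Rightarrow> nat" where
  "wt n v = card {i. i < n \<and> v i \<noteq> 0}"

definition code_dim :: "(nat \<Rightarrow> 'a::field) set \<Rightarrow> nat" where
  "code_dim C = vector_space.dim fscale C"

definition linear_code :: "nat \<Rightarrow> nat \<Rightarrow> (nat \<Rightarrow> 'a::field) set \<Rightarrow> bool" where
  "linear_code n k C \<longleftrightarrow> C \<subseteq> Fvecs n \<and> module.subspace fscale C \<and> code_dim C = k"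

definition equidistant :: "nat \<Rightarrow> nat \<Rightarrow> (nat \<Rightarrow> 'a::field) set \<Rightarrow> bool" where
  "equidistant n \<omega> C \<longleftrightarrow> (\<forall>u\<in>C. u \<noteq> 0 \<longrightarrow> wt n u = \<omega>)"

definition mat_mult :: "nat \<Rightarrow> (nat \<Rightarrow> nat \<Rightarrow> 'a::comm_ring_1) \<Rightarrow> (nat \<Rightarrow> nat \<Rightarrow> 'a) \<Rightarrow> (nat \<Rightarrow> nat \<Rightarrow> 'a)" where
  "mat_mult n X Y = (\<lambda>i j. if i < n \<and> j < n then (\<Sum>l<n. X i l * Y l j) else 0)"

definition mat_one :: "nat \<Rightarrow> (nat \<Rightarrow> nat \<Rightarrow> 'a::comm_ring_1)" where
  "mat_one n = (\<lambda>i j. if i < n \<and> j < n \<and> i = j then 1 else 0)"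

fun mat_pow :: "nat \<Rightarrow> (nat \<Rightarrow> nat \<Rightarrow> 'a::comm_ring_1) \<Rightarrow> nat \<Rightarrow> (nat \<Rightarrow> nat \<Rightarrow> 'a)" where
  "mat_pow n X 0 = mat_one n"
| "mat_pow n X (Suc m) = mat_mult n (mat_pow n X m) X"

definition vec_mat :: "nat \<Rightarrow> (nat \<Rightarrow> 'a::comm_ring_1) \<Rightarrow> (nat \<Rightarrow> nat \<Rightarrow> 'a) \<Rightarrow> (nat \<Rightarrow> 'a)" where
  "vec_mat n u X = (\<lambda>j. if j < n then (\<Sum>i<n. u i * X i j) else 0)"

text \<open>D = diag(eta*lambda, lambda, eta*lambda, ..., eta*lambda) (0-indexed: entry 1 is lambda).\<close>
definition matD :: "nat \<Rightarrow> 'a::comm_ring_1 \<Rightarrow> 'a \<Rightarrow> (nat \<Rightarrow> nat \<Rightarrow> 'a)" where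
  "matD n eta lam = (\<lambda>i j. if i < n \<and> j < n \<and> i = j then (if i = 1 then lam else eta * lam) else 0)"

text \<open>P = [[0', I_{n-1}], [1, 0]]: row i has its 1 in column (i+1) mod n.\<close>
definition matP :: "nat \<Rightarrow> (nat \<Rightarrow> nat \<Rightarrow> 'a::comm_ring_1)" where
  "matP n = (\<lambda>i j. if i < n \<and> j < n \<and> j = (i + 1) mod n then 1 else 0)"

definition matA :: "nat \<Rightarrow> 'a::comm_ring_1 \<Rightarrow> 'a \<Rightarrow> (nat \<Rightarrow> nat \<Rightarrow> 'a)" where
  "matA n eta lam = mat_mult n (matD n eta lam) (matP n)"

text \<open>The cyclic group generated by a matrix X (X invertible, finite order, so
  nonnegative powers suffice).\<close>
definition cyc_group :: "nat \<Rightarrow> (nat \<Rightarrow> nat \<Rightarrow> 'a::comm_ring_1) \<Rightarrow> (nat \<Rightarrow> nat \<Rightarrow> 'a) set" where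
  "cyc_group n X = range (mat_pow n X)"

definition invariant :: "nat \<Rightarrow> (nat \<Rightarrow> nat \<Rightarrow> 'a::comm_ring_1) \<Rightarrow> (nat \<Rightarrow> 'a) set \<Rightarrow> bool" where
  "invariant n X C \<longleftrightarrow> (\<forall>u\<in>C. vec_mat n u X \<in> C)"

definition irreducible_code :: "nat \<Rightarrow> (nat \<Rightarrow> nat \<Rightarrow> 'a::field) \<Rightarrow> (nat \<Rightarrow> 'a) set \<Rightarrow> bool" where
  "irreducible_code n X C \<longleftrightarrow> invariant n X C \<and>
     \<not> (\<exists>C' k'. C' \<subseteq> C \<and> linear_code n k' C' \<and> invariant n X C' \<and> 1 \<le> k' \<and> k' < code_dim C)"

definition faithful_code :: "nat \<Rightarrow> (nat \<Rightarrow> nat \<Rightarrow> 'a::field) \<Rightarrow> (nat \<Rightarrow> 'a) set \<Rightarrow> bool" where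
  "faithful_code n X C \<longleftrightarrow>
     (\<forall>g\<in>cyc_group n X. (\<forall>u\<in>C. vec_mat n u g = u) \<longrightarrow> g = mat_one n)"

definition acts_regularly :: "nat \<Rightarrow> (nat \<Rightarrow> nat \<Rightarrow> 'a::comm_ring_1) set \<Rightarrow> (nat \<Rightarrow> 'a) set \<Rightarrow> bool" where
  "acts_regularly n G S \<longleftrightarrow> (\<forall>g\<in>G. \<forall>s\<in>S. vec_mat n s g \<in> S) \<and>
     (\<forall>s\<in>S. \<forall>t\<in>S. \<exists>!g. g \<in> G \<and> vec_mat n s g = t)"

definition mult_ord :: "'a::monoid_mult \<Rightarrow> nat" where
  "mult_ord x = (LEAST m. 0 < m \<and> x ^ m = 1)"

definition ones :: "nat \<Rightarrow> (nat \<Rightarrow> 'a::zero_neq_one)" where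
  "ones n = (\<lambda>i. if i < n then 1 else 0)"

end

(* Right multiplication by A is the weighted cyclic shift L u = (d_(i-1) u_(i-1))_i, whose n-th
   power is the scalar c = lam^2 eta; c generates F_q^*, so A has order n (q - 1) = q^2 - 1.
   Consequently L^(q^2) = L, and since X^(q^2) - X is the product of the polynomials
   X^q + X - t over t in F_q, every nonzero invariant subspace contains a vector v with
   L^2 v in span {v, L v}: irreducible codes have dimension at most 2.  A one-dimensional one is
   spanned by an eigenvector whose eigenvalue mu satisfies mu^2 = mu^(q+1) = c, so c is a square,
   which forces q to be even, eta = 1 and mu = lam, and the eigenvector to be constant.
   If C is faithful, no power A^j with 0 < j < q^2 - 1 fixes a nonzero codeword, because such a
   codeword s spans C together with s A.  Hence every orbit of <A> on C - {0} has all
   q^2 - 1 elements, and the orbit of a codeword vanishing at coordinate 0, which can have no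
   further zero coordinate, shows that all nonzero codewords have weight q. *)

theory Submission
  imports Defs "HOL-Computational_Algebra.Polynomial"
begin

interpretation fs: vector_space "fscale :: 'a::field \<Rightarrow> (nat \<Rightarrow> 'a) \<Rightarrow> _"
  by (rule vector_space_fscale)

section \<open>Finite fields\<close>

lemma card_UNIV_field_ge_2: "2 \<le> CARD('a::{finite,field})"
  using card_mono[of UNIV "{0::'a, 1}"] by simp

lemma power_card_minus_1_eq_1:
  fixes x :: "'a::{finite,field}"
  assumes "x \<noteq> 0"
  shows "x ^ (CARD('a) - 1) = 1"
proof -
  let ?U = "UNIV - {0::'a}"
  have "(\<Prod>y\<in>?U. x * y) = (\<Prod>y\<in>?U. y)"
    by (rule prod.reindex_bij_witness[of _ "\<lambda>y. y / x" "\<lambda>y. x * y"]) (use assms in auto)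
  moreover have "(\<Prod>y\<in>?U. x * y) = x ^ card ?U * (\<Prod>y\<in>?U. y)"
    by (simp add: prod.distrib)
  moreover have "(\<Prod>y\<in>?U. y) \<noteq> 0" and "card ?U = CARD('a) - 1"
    by (simp_all add: card_Diff_singleton)
  ultimately show ?thesis by simp
qed

lemma power_card_eq_self:
  fixes x :: "'a::{finite,field}"
  shows "x ^ CARD('a) = x"
proof (cases "x = 0")
  case False
  have "x ^ CARD('a) = x * x ^ (CARD('a) - 1)"
    using card_UNIV_field_ge_2[where 'a='a] by (simp flip: power_Suc)
  thus ?thesis using power_card_minus_1_eq_1[OF False] by simp
qed simp

lemma power_eq_power_mod:
  fixes x :: "'a::monoid_mult"
  assumes "x ^ m = 1"
  shows "x ^ a = x ^ (a mod m)"
proof -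
  have "x ^ a = x ^ (m * (a div m) + a mod m)" by simp
  also have "\<dots> = (x ^ m) ^ (a div m) * x ^ (a mod m)" by (simp only: power_add power_mult)
  finally show ?thesis using assms by simp
qed

lemma mult_ord_pos_power_eq_1:
  fixes x :: "'a::{finite,field}"
  assumes "x \<noteq> 0"
  shows mult_ord_pos: "0 < mult_ord x" and power_mult_ord: "x ^ mult_ord x = 1"
proof -
  have "0 < CARD('a) - 1 \<and> x ^ (CARD('a) - 1) = 1"
    using power_card_minus_1_eq_1[OF assms] card_UNIV_field_ge_2[where 'a='a] by auto
  hence "0 < mult_ord x \<and> x ^ mult_ord x = 1"
    unfolding mult_ord_def by (rule LeastI)
  thus "0 < mult_ord x" and "x ^ mult_ord x = 1" by auto
qed

lemma power_eq_1_iff_mult_ord_dvd: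
  fixes x :: "'a::{finite,field}"
  assumes "x \<noteq> 0"
  shows "x ^ m = 1 \<longleftrightarrow> mult_ord x dvd m"
proof
  assume "x ^ m = 1"
  hence residue: "x ^ (m mod mult_ord x) = 1"
    using power_eq_power_mod[OF power_mult_ord[OF assms]] by metis
  have "m mod mult_ord x = 0"
  proof (rule ccontr)
    assume "m mod mult_ord x \<noteq> 0"
    hence "mult_ord x \<le> m mod mult_ord x"
      using residue unfolding mult_ord_def by (intro Least_le) simp
    thus False using mod_less_divisor[OF mult_ord_pos[OF assms], of m] by simp
  qed
  thus "mult_ord x dvd m" by (simp add: dvd_eq_mod_eq_0)
qed (auto simp: power_mult power_mult_ord[OF assms] elim!: dvdE)

lemma of_nat_card_eq_0: "of_nat CARD('a::{finite,field}) = (0::'a)"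
proof -
  have "(\<Sum>y\<in>(UNIV::'a set). 1 + y) = (\<Sum>y\<in>UNIV. y)"
    by (rule sum.reindex_bij_witness[of _ "\<lambda>y. y - 1" "\<lambda>y. 1 + y"]) auto
  thus ?thesis by (simp add: sum.distrib)
qed

lemma CHAR_eq_if_card_eq_prime_power:
  assumes "prime p" "CARD('a::{finite,field}) = p ^ f"
  shows "CHAR('a) = p"
proof -
  have "prime CHAR('a)"
    by (intro prime_CHAR_semidom finite_imp_CHAR_pos) simp
  moreover have "CHAR('a) dvd p ^ f"
    using of_nat_card_eq_0[where 'a='a] assms(2) by (metis of_nat_eq_0_iff_char_dvd)
  ultimately show ?thesis
    using assms(1) prime_dvd_power primes_dvd_imp_eq by blast
qed

lemma two_eq_0_if_even_card:
  assumes "prime p" and "CARD('a::{finite,field}) = p ^ f" and "even CARD('a)"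
  shows "(2::'a) = 0"
proof -
  have "2 dvd p"
    using assms(2,3) by (simp add: even_power)
  hence "p = 2"
    using assms(1) primes_dvd_imp_eq[of 2 p] by simp
  thus ?thesis
    using CHAR_eq_if_card_eq_prime_power[OF assms(1,2)] of_nat_CHAR[where 'a='a] by simp
qed

lemma prod_UNIV_X_minus_const:
  "(\<Prod>t\<in>(UNIV::'a::{finite,field} set). [:- t, 1:]) = monom 1 CARD('a) - [:0, 1:]"
  (is "?P = ?Q")
proof (rule ccontr)
  assume "?P \<noteq> ?Q"
  hence nonzero: "?P - ?Q \<noteq> 0" by simp
  have deg_P: "degree ?P = CARD('a)"
    by (simp add: degree_prod_eq_sum_degree)
  have "lead_coeff ?P = 1"
    by (simp only: lead_coeff_prod) simp
  moreover have "coeff ?Q CARD('a) = 1"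
    using card_UNIV_field_ge_2[where 'a='a] by (simp add: coeff_pCons split: nat.split)
  ultimately have "coeff (?P - ?Q) CARD('a) = 0"
    by (simp add: deg_P)
  hence "degree (?P - ?Q) \<noteq> CARD('a)"
    using nonzero leading_coeff_0_iff by metis
  moreover have "degree (?P - ?Q) \<le> CARD('a)"
    using card_UNIV_field_ge_2[where 'a='a] deg_P
    by (intro degree_diff_le) (auto intro: order_trans[OF degree_monom_le] degree_diff_le)
  ultimately have "degree (?P - ?Q) < CARD('a)"
    by simp
  moreover have "poly (?P - ?Q) x = 0" for x :: 'a
    using power_card_eq_self[of x] by (simp add: poly_prod poly_monom prod_zero)
  ultimately show False
    using card_poly_roots_bound[OF nonzero] by simp
qed

lemma prod_UNIV_minus_const:
  fixes Y :: "'a::{finite,field} poly"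
  shows "(\<Prod>t\<in>UNIV. Y - [:t:]) = Y ^ CARD('a) - Y"
proof -
  have monom_pcompose: "pcompose (monom 1 m) Y = Y ^ m" for m
    by (induct m) (simp_all add: monom_0 monom_Suc pcompose_pCons)
  have "(\<Prod>t\<in>UNIV. Y - [:t:]) = (\<Prod>t\<in>UNIV. pcompose [:- t, 1:] Y)"
    by (rule prod.cong) (simp_all add: pcompose_pCons)
  also have "\<dots> = pcompose (monom 1 CARD('a) - [:0, 1:]) Y"
    by (subst pcompose_prod[symmetric]) (simp only: prod_UNIV_X_minus_const)
  also have "\<dots> = Y ^ CARD('a) - Y"
    by (simp add: pcompose_diff monom_pcompose pcompose_pCons del: One_nat_def)
  finally show ?thesis .
qed

lemma prod_UNIV_X_plus_X_power_card_minus_const: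
  assumes "prime p" and "CARD('a::{finite,field}) = p ^ f"
  shows "(\<Prod>t\<in>UNIV. monom (1::'a) 1 + monom 1 CARD('a) - [:t:])
    = monom 1 (CARD('a) * CARD('a)) - monom 1 1"
proof -
  let ?q = "CARD('a)"
  have "CHAR('a poly) = p"
    using CHAR_eq_if_card_eq_prime_power[OF assms] by simp
  hence "(monom (1::'a) 1 + monom 1 ?q) ^ ?q = monom 1 1 ^ ?q + monom 1 ?q ^ ?q"
    using assms by (intro freshmans_dream') auto
  thus ?thesis
    by (simp add: prod_UNIV_minus_const monom_power)
qed

lemma generator_not_square:
  fixes c :: "'a::{finite,field}"
  assumes "odd CARD('a)" and "c \<noteq> 0" and "\<And>r. c ^ r = 1 \<Longrightarrow> CARD('a) - 1 dvd r"
  shows "c \<noteq> \<mu>\<^sup>2"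
proof
  assume square: "c = \<mu>\<^sup>2"
  have "even (CARD('a) - 1)"
    using assms(1) card_UNIV_field_ge_2[where 'a='a] by simp
  then obtain h where h: "CARD('a) - 1 = 2 * h"
    by (elim evenE)
  have "c ^ h = \<mu> ^ (CARD('a) - 1)"
    by (simp only: square h power_mult)
  also have "\<dots> = 1"
    using square assms(2) by (intro power_card_minus_1_eq_1) auto
  finally have "2 * h dvd h"
    using assms(3) h by metis
  thus False
    using h card_UNIV_field_ge_2[where 'a='a] by simp
qed

locale unit_generators =
  fixes eta lam :: "'a::{finite,field}"
  assumes eta_nonzero: "eta \<noteq> 0" and lam_nonzero: "lam \<noteq> 0"
    and odd_mult_ord_lam: "odd (mult_ord lam)"
    and mult_ord_eta_power_of_2: "\<exists>e. mult_ord eta = 2 ^ e"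
    and units_generated: "\<forall>x. x \<noteq> 0 \<longrightarrow> (\<exists>a b. x = eta ^ a * lam ^ b)"
begin

lemma coprime_mult_ord: "coprime (mult_ord lam) (2 * mult_ord eta)"
  using odd_mult_ord_lam mult_ord_eta_power_of_2 by (auto simp flip: power_Suc)

lemma card_minus_1_eq_mult_ord_product: "CARD('a) - 1 = mult_ord lam * mult_ord eta"
proof (rule antisym)
  let ?I = "{..<mult_ord eta} \<times> {..<mult_ord lam}"
  have "UNIV - {0} \<subseteq> (\<lambda>(a, b). eta ^ a * lam ^ b) ` ?I"
  proof
    fix x :: 'a
    assume "x \<in> UNIV - {0}"
    then obtain a b where "x = eta ^ a * lam ^ b"
      using units_generated by auto
    hence "x = eta ^ (a mod mult_ord eta) * lam ^ (b mod mult_ord lam)"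
      using power_eq_power_mod power_mult_ord eta_nonzero lam_nonzero by metis
    thus "x \<in> (\<lambda>(a, b). eta ^ a * lam ^ b) ` ?I"
      using mult_ord_pos eta_nonzero lam_nonzero by force
  qed
  hence "card (UNIV - {0::'a}) \<le> card ((\<lambda>(a, b). eta ^ a * lam ^ b) ` ?I)"
    by (intro card_mono) auto
  also have "\<dots> \<le> card ?I"
    by (rule card_image_le) simp
  finally show "CARD('a) - 1 \<le> mult_ord lam * mult_ord eta"
    by (simp add: card_Diff_singleton mult.commute)
  have "mult_ord lam dvd CARD('a) - 1" and "mult_ord eta dvd CARD('a) - 1"
    using power_card_minus_1_eq_1 power_eq_1_iff_mult_ord_dvd eta_nonzero lam_nonzero by blast+
  hence "mult_ord lam * mult_ord eta dvd CARD('a) - 1"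
    using coprime_mult_ord by (simp add: divides_mult)
  thus "mult_ord lam * mult_ord eta \<le> CARD('a) - 1"
    using card_UNIV_field_ge_2[where 'a='a] by (intro dvd_imp_le) auto
qed

lemma lam_sq_eta_power_eq_1_imp_dvd:
  assumes "(lam\<^sup>2 * eta) ^ r = 1"
  shows "CARD('a) - 1 dvd r"
proof -
  have "((lam\<^sup>2 * eta) ^ r) ^ mult_ord eta = lam ^ (r * (2 * mult_ord eta)) * (eta ^ mult_ord eta) ^ r"
    by (simp only: power_mult_distrib power_mult[symmetric] mult.commute mult.left_commute)
  hence "lam ^ (r * (2 * mult_ord eta)) = 1"
    using assms power_mult_ord[OF eta_nonzero] by simp
  hence "mult_ord lam dvd r * (2 * mult_ord eta)"
    using power_eq_1_iff_mult_ord_dvd[OF lam_nonzero] by simp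
  hence lam_dvd: "mult_ord lam dvd r"
    using coprime_mult_ord coprime_dvd_mult_left_iff by blast
  have "(lam\<^sup>2 * eta) ^ r = (lam ^ r)\<^sup>2 * eta ^ r"
    by (simp only: power_mult_distrib power_mult[symmetric] mult.commute)
  hence "eta ^ r = (lam\<^sup>2 * eta) ^ r"
    using lam_dvd power_eq_1_iff_mult_ord_dvd[OF lam_nonzero, of r] by simp
  hence "mult_ord eta dvd r"
    using assms power_eq_1_iff_mult_ord_dvd[OF eta_nonzero] by simp
  with lam_dvd have "mult_ord lam * mult_ord eta dvd r"
    using coprime_mult_ord by (simp add: divides_mult)
  thus ?thesis
    by (simp only: card_minus_1_eq_mult_ord_product)
qed

lemma eta_eq_1_if_even_card:
  assumes "even CARD('a)"
  shows "eta = 1"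
proof -
  have "odd (CARD('a) - 1)"
    using assms card_UNIV_field_ge_2[where 'a='a] by simp
  hence "odd (mult_ord eta)"
    by (metis card_minus_1_eq_mult_ord_product even_mult_iff)
  moreover obtain e where "mult_ord eta = 2 ^ e"
    using mult_ord_eta_power_of_2 by blast
  ultimately have "mult_ord eta = 1"
    by (cases e) simp_all
  thus ?thesis
    using power_mult_ord[OF eta_nonzero] by simp
qed

end

section \<open>Invariant subspaces of linear maps\<close>

context vector_space
begin

lemma card_le_dim_if_independent:
  assumes "finite V" and "B \<subseteq> V" and "independent B"
  shows "card B \<le> dim V"
proof -
  obtain B' where "B' \<subseteq> V" and "V \<subseteq> span B'" and "card B' = dim V"
    by (rule basis_exists)
  moreover have "finite B'"
    using \<open>B' \<subseteq> V\<close> assms(1) by (rule finite_subset)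
  moreover have "B \<subseteq> span B'"
    using assms(2) \<open>V \<subseteq> span B'\<close> by (rule order_trans)
  ultimately show ?thesis
    using independent_span_bound[of B' B] assms(3) by simp
qed

lemma span_eq_if_dim_le_card:
  assumes "finite V" and "subspace V" and "B \<subseteq> V" and "independent B" and "dim V \<le> card B"
  shows "span B = V"
proof (rule ccontr)
  assume "span B \<noteq> V"
  moreover have "span B \<subseteq> V"
    by (rule span_minimal[OF assms(3,2)])
  ultimately obtain x where x: "x \<in> V" "x \<notin> span B"
    by blast
  hence "card (insert x B) \<le> dim V"
    using assms by (intro card_le_dim_if_independent independent_insertI) auto
  moreover have "finite B"
    using assms(1,3) finite_subset by blast
  ultimately show False
    using x assms(5) span_base[of x B] by (simp add: card_insert_if split: if_splits)
qed

lemma span_doubleton: "span {a, b} = {scale x a + scale y b | x y. True}"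
proof (intro set_eqI iffI)
  fix z
  assume "z \<in> span {a, b}"
  then obtain x y where "z - scale x a = scale y b"
    unfolding span_breakdown_eq span_singleton by blast
  hence "z = scale x a + scale y b"
    by (metis diff_eq_eq add.commute)
  thus "z \<in> {scale x a + scale y b | x y. True}"
    by blast
next
  fix z
  assume "z \<in> {scale x a + scale y b | x y. True}"
  then obtain x y where "z = scale x a + scale y b"
    by blast
  thus "z \<in> span {a, b}"
    by (simp add: span_add span_scale span_base)
qed

lemma scale_add_scale_eq_0_imp:
  assumes "a \<noteq> 0" and "b \<notin> span {a}" and "scale x a + scale y b = 0"
  shows "x = 0" and "y = 0"
proof -
  show "y = 0"
  proof (rule ccontr)
    assume "y \<noteq> 0"
    hence "b = scale (inverse y) (scale y b)"
      by simp
    also have "scale y b = - scale x a"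
      using assms(3) by (simp only: neg_eq_iff_add_eq_0 eq_commute[of "scale y b"])
    also have "scale (inverse y) (- scale x a) \<in> span {a}"
      by (intro span_scale span_neg span_base) simp
    finally show False
      using assms(2) by simp
  qed
  thus "x = 0"
    using assms(1,3) by simp
qed

lemma card_span_doubleton:
  assumes "a \<noteq> 0" and "b \<notin> span {a}"
  shows "card (span {a, b}) = CARD('a) * CARD('a)"
proof -
  have "span {a, b} = (\<lambda>(x, y). scale x a + scale y b) ` UNIV"
    by (auto simp: span_doubleton)
  moreover have "inj (\<lambda>(x, y). scale x a + scale y b)"
  proof (rule injI, clarify)
    fix x y x' y'
    assume "scale x a + scale y b = scale x' a + scale y' b"
    hence "scale (x - x') a + scale (y - y') b = 0"
      by (simp add: algebra_simps)
    hence "x - x' = 0" and "y - y' = 0"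
      by (rule scale_add_scale_eq_0_imp[OF assms])+
    thus "x = x' \<and> y = y'"
      by simp
  qed
  ultimately show ?thesis
    by (simp add: card_image)
qed

end

lemma linear_funpow:
  "Vector_Spaces.linear fscale fscale L \<Longrightarrow> Vector_Spaces.linear fscale fscale (L ^^ n)"
  by (induct n) (simp_all add: fs.module_hom_id Vector_Spaces.linear_compose)

lemma funpow_mult_eq_scale_power:
  assumes "Vector_Spaces.linear fscale fscale L" and "\<forall>u\<in>V. L u \<in> V"
    and "\<forall>u\<in>V. (L ^^ N) u = fscale c u" and "u \<in> V"
  shows "(L ^^ (N * r)) u = fscale (c ^ r) u"
proof (induct r)
  case (Suc r)
  interpret L_N: Vector_Spaces.linear fscale fscale "L ^^ N"
    using assms(1) by (rule linear_funpow)
  have "(L ^^ (N * Suc r)) u = (L ^^ N) ((L ^^ (N * r)) u)"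
    by (simp add: funpow_add)
  also have "\<dots> = fscale (c ^ Suc r) u"
    using Suc assms(3,4) by (simp add: L_N.scale fs.scale_scale mult.commute)
  finally show ?case .
qed (simp add: fs.scale_one)

lemma funpow_eigenvector:
  assumes "Vector_Spaces.linear fscale fscale L" and "L u = fscale \<mu> u"
  shows "(L ^^ m) u = fscale (\<mu> ^ m) u"
proof (induct m)
  case (Suc m)
  interpret L: Vector_Spaces.linear fscale fscale L by fact
  show ?case
    using Suc assms(2) by (simp add: L.scale fs.scale_scale mult.commute)
qed (simp add: fs.scale_one)

definition poly_op :: "((nat \<Rightarrow> 'a) \<Rightarrow> nat \<Rightarrow> 'a) \<Rightarrow> 'a::field poly \<Rightarrow> (nat \<Rightarrow> 'a) \<Rightarrow> nat \<Rightarrow> 'a"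
  where "poly_op L P u = (\<Sum>i\<le>degree P. fscale (coeff P i) ((L ^^ i) u))"

lemma poly_op_eq_sum:
  assumes "degree P < N"
  shows "poly_op L P u = (\<Sum>i<N. fscale (coeff P i) ((L ^^ i) u))"
  unfolding poly_op_def using assms
  by (intro sum.mono_neutral_left) (auto simp: coeff_eq_0 fs.scale_zero_left)

lemma poly_op_add: "poly_op L (P + Q) u = poly_op L P u + poly_op L Q u"
proof -
  let ?N = "Suc (degree P + degree Q)"
  have "degree (P + Q) < ?N"
    using degree_add_le_max[of P Q] by simp
  thus ?thesis
    by (simp add: poly_op_eq_sum[of _ ?N] fs.scale_left_distrib sum.distrib del: sum.lessThan_Suc)
qed

lemma poly_op_diff: "poly_op L (P - Q) u = poly_op L P u - poly_op L Q u"
proof -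
  let ?N = "Suc (degree P + degree Q)"
  have "degree (P - Q) < ?N"
    using degree_diff_le_max[of P Q] by simp
  thus ?thesis
    by (simp add: poly_op_eq_sum[of _ ?N] fs.scale_left_diff_distrib sum_subtractf del: sum.lessThan_Suc)
qed

lemma poly_op_smult: "poly_op L (smult a P) u = fscale a (poly_op L P u)"
proof -
  have "degree (smult a P) < Suc (degree P)"
    using degree_smult_le[of a P] by simp
  thus ?thesis
    by (simp add: poly_op_eq_sum[of _ "Suc (degree P)"] fs.scale_sum_right fs.scale_scale
        del: sum.lessThan_Suc)
qed

lemma poly_op_pCons: "poly_op L (pCons a P) u = fscale a u + poly_op L P (L u)"
proof -
  have "degree (pCons a P) < Suc (Suc (degree P))"
    using degree_pCons_le[of a P] by simp
  hence "poly_op L (pCons a P) u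
      = fscale a u + (\<Sum>i<Suc (degree P). fscale (coeff P i) ((L ^^ Suc i) u))"
    by (simp add: poly_op_eq_sum[of _ "Suc (Suc (degree P))"] sum.lessThan_Suc_shift
        del: sum.lessThan_Suc)
  thus ?thesis
    by (simp add: poly_op_eq_sum[of P "Suc (degree P)"] funpow_Suc_right del: funpow.simps)
qed

lemma poly_op_const: "poly_op L [:a:] u = fscale a u"
  by (simp add: poly_op_def)

lemma poly_op_one: "poly_op L 1 u = u"
  by (simp add: poly_op_def fs.scale_one)

lemma poly_op_monom: "poly_op L (monom 1 m) u = (L ^^ m) u"
  unfolding poly_op_def
  by (simp add: degree_monom_eq coeff_monom if_distrib[where f = "\<lambda>a. fscale a _"]
      fs.scale_one fs.scale_zero_left cong: if_cong)

lemma poly_op_commute: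
  assumes "Vector_Spaces.linear fscale fscale L"
  shows "L (poly_op L P u) = poly_op L P (L u)"
proof -
  interpret L: Vector_Spaces.linear fscale fscale L by fact
  show ?thesis
    by (simp add: poly_op_def L.sum L.scale funpow_swap1)
qed

lemma poly_op_mult:
  assumes "Vector_Spaces.linear fscale fscale L"
  shows "poly_op L (P * Q) u = poly_op L P (poly_op L Q u)"
proof (induct P arbitrary: u rule: pCons_induct)
  case 0
  show ?case by (simp add: poly_op_def)
next
  case (pCons a P)
  have "poly_op L (pCons a P * Q) u = fscale a (poly_op L Q u) + poly_op L (P * Q) (L u)"
    by (simp add: poly_op_add poly_op_smult poly_op_pCons fs.scale_zero_left)
  also have "poly_op L (P * Q) (L u) = poly_op L P (L (poly_op L Q u))"
    by (simp add: pCons.hyps poly_op_commute[OF assms])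
  finally show ?case
    by (simp add: poly_op_pCons)
qed

lemma poly_op_in_subspace:
  assumes "fs.subspace C" and "\<forall>u\<in>C. L u \<in> C" and "u \<in> C"
  shows "poly_op L P u \<in> C"
proof -
  have "(L ^^ i) u \<in> C" for i
    using assms(2,3) by (induct i) auto
  thus ?thesis
    unfolding poly_op_def using assms(1) by (intro fs.subspace_sum fs.subspace_scale) auto
qed

lemma poly_op_prod_eq_0_imp:
  assumes "Vector_Spaces.linear fscale fscale L" and "fs.subspace C" and "\<forall>u\<in>C. L u \<in> C"
    and "finite T" and "u \<in> C" and "u \<noteq> 0" and "poly_op L (\<Prod>t\<in>T. h t) u = 0"
  shows "\<exists>t\<in>T. \<exists>v\<in>C. v \<noteq> 0 \<and> poly_op L (h t) v = 0"
  using assms(4,7)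
proof (induct T rule: finite_induct)
  case empty
  thus ?case
    using assms(6) by (metis poly_op_one prod.empty)
next
  case (insert t T)
  let ?w = "poly_op L (\<Prod>t\<in>T. h t) u"
  have "poly_op L (h t) ?w = 0"
    using insert.prems by (simp only: prod.insert[OF insert.hyps(1,2)] poly_op_mult[OF assms(1)])
  moreover have "?w \<in> C"
    using assms(2,3,5) by (rule poly_op_in_subspace)
  ultimately show ?case
    using insert by blast
qed

lemma span_pair_invariant_if_quadratic:
  assumes "Vector_Spaces.linear fscale fscale L" and "L (L v) = fscale t (L v) - fscale c v"
    and "x \<in> fs.span {v, L v}"
  shows "L x \<in> fs.span {v, L v}"
proof -
  interpret L: Vector_Spaces.linear fscale fscale L by fact
  obtain a b where "x = fscale a v + fscale b (L v)"
    using assms(3) by (auto simp: fs.span_doubleton)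
  hence "L x = fscale a (L v) + fscale b (fscale t (L v) - fscale c v)"
    by (simp add: L.add L.scale assms(2))
  also have "\<dots> \<in> fs.span {v, L v}"
    by (intro fs.span_add fs.span_scale fs.span_diff fs.span_base) auto
  finally show ?thesis .
qed

lemma funpow_card_square_eq:
  fixes L :: "(nat \<Rightarrow> 'a::{finite,field}) \<Rightarrow> nat \<Rightarrow> 'a"
  assumes L: "Vector_Spaces.linear fscale fscale L" and V: "\<forall>u\<in>V. L u \<in> V"
    and L_power: "\<forall>u\<in>V. (L ^^ (CARD('a) + 1)) u = fscale c u" and "c \<noteq> 0" and "u \<in> V"
  shows "(L ^^ (CARD('a) * CARD('a))) u = L u"
proof -
  let ?q = "CARD('a)"
  have "0 < ?q"
    by (rule finite_UNIV_card_ge_0) simp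
  then obtain k where k: "?q = Suc k"
    using gr0_implies_Suc by blast
  have "?q * ?q = Suc ((?q + 1) * (?q - 1))"
    by (simp add: k)
  hence "(L ^^ (?q * ?q)) u = (L ^^ Suc ((?q + 1) * (?q - 1))) u"
    by (rule arg_cong)
  also have "\<dots> = L ((L ^^ ((?q + 1) * (?q - 1))) u)"
    by (simp only: funpow.simps(2) comp_apply)
  also have "(L ^^ ((?q + 1) * (?q - 1))) u = fscale (c ^ (?q - 1)) u"
    by (rule funpow_mult_eq_scale_power[OF L V L_power \<open>u \<in> V\<close>])
  finally show ?thesis
    using power_card_minus_1_eq_1[OF \<open>c \<noteq> 0\<close>] by (simp add: fs.scale_one)
qed

lemma invariant_subspace_has_quadratic_vector:
  fixes L :: "(nat \<Rightarrow> 'a::{finite,field}) \<Rightarrow> nat \<Rightarrow> 'a"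
  assumes "prime p" and "CARD('a) = p ^ f" and L: "Vector_Spaces.linear fscale fscale L"
    and C: "fs.subspace C" "\<forall>u\<in>C. L u \<in> C"
    and "c \<noteq> 0" and L_power: "\<forall>u\<in>C. (L ^^ (CARD('a) + 1)) u = fscale c u"
    and "u \<in> C" and "u \<noteq> 0"
  obtains v t where "v \<in> C" and "v \<noteq> 0" and "L (L v) = fscale t (L v) - fscale c v"
proof -
  interpret L: Vector_Spaces.linear fscale fscale L by fact
  let ?q = "CARD('a)"
  define Y :: "'a poly" where "Y = monom 1 1 + monom 1 ?q"
  have "poly_op L (\<Prod>t\<in>UNIV. Y - [:t:]) u = 0"
    unfolding Y_def prod_UNIV_X_plus_X_power_card_minus_const[OF assms(1,2)]
    using funpow_card_square_eq[OF L C(2) L_power \<open>c \<noteq> 0\<close> \<open>u \<in> C\<close>]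
    by (simp add: poly_op_diff poly_op_monom)
  then obtain t v where v: "v \<in> C" "v \<noteq> 0" and "poly_op L (Y - [:t:]) v = 0"
    using poly_op_prod_eq_0_imp[OF L C finite_class.finite_UNIV \<open>u \<in> C\<close> \<open>u \<noteq> 0\<close>] by blast
  hence "L v + (L ^^ ?q) v - fscale t v = 0"
    by (simp add: Y_def poly_op_diff poly_op_add poly_op_monom poly_op_const)
  hence "L (L v + (L ^^ ?q) v - fscale t v) = L 0"
    by (rule arg_cong)
  moreover have "L ((L ^^ ?q) v) = fscale c v"
    using L_power v(1) by simp
  ultimately have "L (L v) + fscale c v - fscale t (L v) = 0"
    by (simp only: L.diff L.add L.scale L.zero)
  hence "L (L v) = fscale t (L v) - fscale c v"
    by (simp add: algebra_simps)
  thus ?thesis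
    using that v by blast
qed

section \<open>Matrices and weighted cyclic shifts\<close>

lemma finite_Fvecs: "finite (Fvecs n :: (nat \<Rightarrow> 'a::{finite,zero}) set)"
proof -
  have "(Fvecs n :: (nat \<Rightarrow> 'a) set)
      \<subseteq> (\<lambda>xs i. if i < n then xs ! i else 0) ` {xs. set xs \<subseteq> UNIV \<and> length xs = n}"
  proof
    fix v :: "nat \<Rightarrow> 'a"
    assume "v \<in> Fvecs n"
    hence "v = (\<lambda>i. if i < n then map v [0..<n] ! i else 0)"
      by (auto simp: Fvecs_def)
    thus "v \<in> (\<lambda>xs i. if i < n then xs ! i else 0) ` {xs. set xs \<subseteq> UNIV \<and> length xs = n}"
      by (auto intro!: image_eqI[of _ _ "map v [0..<n]"])
  qed
  moreover have "finite {xs. set xs \<subseteq> (UNIV :: 'a set) \<and> length xs = n}"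
    by (rule finite_lists_length_eq) simp
  ultimately show ?thesis
    by (meson finite_imageI finite_subset)
qed

lemma vec_mat_mat_one: "u \<in> Fvecs n \<Longrightarrow> vec_mat n u (mat_one n) = u"
  by (auto simp: vec_mat_def mat_one_def Fvecs_def fun_eq_iff if_distrib[of "(*) _"] cong: if_cong)

lemma vec_mat_mat_mult: "vec_mat n u (mat_mult n X Y) = vec_mat n (vec_mat n u X) Y"
proof (rule ext)
  fix j
  show "vec_mat n u (mat_mult n X Y) j = vec_mat n (vec_mat n u X) Y j"
  proof (cases "j < n")
    case True
    have "(\<Sum>i<n. u i * mat_mult n X Y i j) = (\<Sum>i<n. \<Sum>l<n. u i * X i l * Y l j)"
      by (rule sum.cong) (auto simp: mat_mult_def True sum_distrib_left mult.assoc)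
    also have "\<dots> = (\<Sum>l<n. vec_mat n u X l * Y l j)"
      by (subst sum.swap) (auto simp: vec_mat_def sum_distrib_right intro!: sum.cong)
    finally show ?thesis
      by (simp add: vec_mat_def True)
  qed (simp add: vec_mat_def)
qed

lemma vec_mat_mat_pow:
  "u \<in> Fvecs n \<Longrightarrow> vec_mat n u (mat_pow n X m) = ((\<lambda>v. vec_mat n v X) ^^ m) u"
  by (induct m) (simp_all add: vec_mat_mat_one vec_mat_mat_mult)

lemma mat_eq_if_vec_mat_eq:
  assumes "\<And>i j. \<not> (i < n \<and> j < n) \<Longrightarrow> X i j = 0" and "\<And>i j. \<not> (i < n \<and> j < n) \<Longrightarrow> Y i j = 0"
    and "\<And>u. u \<in> Fvecs n \<Longrightarrow> vec_mat n u X = vec_mat n u Y"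
  shows "X = Y"
proof (intro ext)
  fix i j
  show "X i j = Y i j"
  proof (cases "i < n \<and> j < n")
    case True
    define e :: "nat \<Rightarrow> 'a" where "e = (\<lambda>k. if k = i then 1 else 0)"
    have "vec_mat n e Z j = Z i j" for Z
      using True by (simp add: vec_mat_def e_def if_distrib[of "\<lambda>a. a * _"] cong: if_cong)
    moreover have "e \<in> Fvecs n"
      using True by (auto simp: e_def Fvecs_def)
    ultimately show ?thesis
      using assms(3) by metis
  qed (use assms in auto)
qed

lemma mat_pow_eq_iff:
  "mat_pow n X a = mat_pow n X b \<longleftrightarrow>
    (\<forall>u\<in>Fvecs n. ((\<lambda>v. vec_mat n v X) ^^ a) u = ((\<lambda>v. vec_mat n v X) ^^ b) u)"
proof
  assume "\<forall>u\<in>Fvecs n. ((\<lambda>v. vec_mat n v X) ^^ a) u = ((\<lambda>v. vec_mat n v X) ^^ b) u"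
  moreover have "mat_pow n X m i j = 0" if "\<not> (i < n \<and> j < n)" for m i j
    using that by (cases m) (auto simp: mat_one_def mat_mult_def)
  ultimately show "mat_pow n X a = mat_pow n X b"
    by (intro mat_eq_if_vec_mat_eq[where n = n]) (simp_all add: vec_mat_mat_pow)
qed (simp add: vec_mat_mat_pow[symmetric])

lemma pred_mod_Suc_mod: "(i::nat) < n \<Longrightarrow> (Suc i mod n + n - 1) mod n = i"
  by (cases "Suc i < n") (simp_all add: mod_if)

lemma Suc_mod_pred_mod:
  assumes "(j::nat) < n"
  shows "Suc ((j + n - 1) mod n) mod n = j"
proof (cases j)
  case (Suc k)
  hence "j + n - 1 = k + n"
    by simp
  thus ?thesis
    using assms Suc by simp
qed (use assms in simp)

lemma Suc_mod_eq_iff_pred_mod: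
  fixes i j n :: nat
  assumes "i < n" and "j < n"
  shows "j = Suc i mod n \<longleftrightarrow> i = (j + n - 1) mod n"
proof
  assume "j = Suc i mod n"
  thus "i = (j + n - 1) mod n"
    using pred_mod_Suc_mod[OF assms(1)] by simp
next
  assume "i = (j + n - 1) mod n"
  thus "j = Suc i mod n"
    using Suc_mod_pred_mod[OF assms(2)] by simp
qed

text \<open>The right action of diag(d 0, ..., d (n - 1)) times the cyclic permutation matrix P:
  coordinate i of u is moved to position (i + 1) mod n and multiplied by d i.\<close>

definition cyclic_shift :: "nat \<Rightarrow> (nat \<Rightarrow> 'a::comm_ring_1) \<Rightarrow> (nat \<Rightarrow> 'a) \<Rightarrow> nat \<Rightarrow> 'a" where
  "cyclic_shift n d u j = (if j < n then d ((j + n - 1) mod n) * u ((j + n - 1) mod n) else 0)"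

lemma cyclic_shift_in_Fvecs: "cyclic_shift n d u \<in> Fvecs n"
  by (simp add: Fvecs_def cyclic_shift_def)

lemma cyclic_shift_Suc_mod:
  assumes "i < n"
  shows "cyclic_shift n d u (Suc i mod n) = d i * u i"
proof -
  have "(Suc i mod n + n - 1) mod n = i"
    by (rule pred_mod_Suc_mod[OF assms])
  thus ?thesis
    using assms by (simp add: cyclic_shift_def)
qed

lemma linear_cyclic_shift: "Vector_Spaces.linear fscale fscale (cyclic_shift n d)"
  by (auto simp: Vector_Spaces.linear_iff vector_space_fscale cyclic_shift_def fscale_def fun_eq_iff
      algebra_simps)

lemma funpow_cyclic_shift_apply:
  assumes "i < n"
  shows "(cyclic_shift n d ^^ m) u ((i + m) mod n) = (\<Prod>l<m. d ((i + l) mod n)) * u i"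
proof (induct m)
  case (Suc m)
  have "(i + m) mod n < n"
    using assms by simp
  hence "(cyclic_shift n d ^^ Suc m) u (Suc ((i + m) mod n) mod n)
      = d ((i + m) mod n) * (cyclic_shift n d ^^ m) u ((i + m) mod n)"
    by (simp add: cyclic_shift_Suc_mod)
  thus ?case
    using Suc by (simp add: mod_Suc_eq ac_simps)
qed (use assms in simp)

lemma prod_rotate:
  fixes i n :: nat
  assumes "i < n"
  shows "(\<Prod>l<n. g ((i + l) mod n)) = (\<Prod>l<n. g l)"
proof (rule prod.reindex_bij_witness[of _ "\<lambda>l. (l + (n - i)) mod n" "\<lambda>l. (i + l) mod n"])
  fix l
  have "i + l + (n - i) = l + n"
    using assms by simp
  moreover assume "l \<in> {..<n}"
  ultimately show "((i + l) mod n + (n - i)) mod n = l" and "(i + (l + (n - i)) mod n) mod n = l"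
    by (simp_all only: mod_add_left_eq mod_add_right_eq add.assoc[symmetric]) simp_all
qed (use assms in auto)

lemma funpow_cyclic_shift_n:
  assumes "u \<in> Fvecs n"
  shows "(cyclic_shift n d ^^ n) u = fscale (\<Prod>l<n. d l) u"
proof
  fix j
  show "(cyclic_shift n d ^^ n) u j = fscale (\<Prod>l<n. d l) u j"
  proof (cases "j < n")
    case True
    thus ?thesis
      using funpow_cyclic_shift_apply[OF True, where m = n] by (simp add: prod_rotate fscale_def)
  next
    case False
    have "(cyclic_shift n d ^^ n) u \<in> Fvecs n"
      using assms by (cases n) (simp_all add: cyclic_shift_in_Fvecs)
    thus ?thesis
      using False assms by (simp add: Fvecs_def fscale_def)
  qed
qed

lemma vec_mat_matA:
  assumes "0 < n"
  shows "vec_mat n u (matA n eta lam) = cyclic_shift n (\<lambda>i. if i = 1 then lam else eta * lam) u"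
    (is "_ = cyclic_shift n ?w u")
proof
  fix j
  show "vec_mat n u (matA n eta lam) j = cyclic_shift n ?w u j"
  proof (cases "j < n")
    case True
    have entry: "matA n eta lam i j = (if i = (j + n - 1) mod n then ?w i else 0)" if "i < n" for i
    proof -
      have "matA n eta lam i j = (\<Sum>l<n. matD n eta lam i l * matP n l j)"
        using that True by (simp add: matA_def mat_mult_def)
      also have "\<dots> = (\<Sum>l<n. if l = i then ?w i * matP n l j else 0)"
        by (rule sum.cong) (auto simp: matD_def that)
      also have "\<dots> = ?w i * matP n i j"
        using that by simp
      finally show ?thesis
        using that True Suc_mod_eq_iff_pred_mod[OF that True] by (auto simp: matP_def)
    qed
    have "vec_mat n u (matA n eta lam) j = (\<Sum>i<n. u i * matA n eta lam i j)"
      using True by (simp add: vec_mat_def)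
    also have "\<dots> = (\<Sum>i<n. if i = (j + n - 1) mod n then u i * ?w i else 0)"
      by (rule sum.cong) (simp_all add: entry)
    also have "\<dots> = cyclic_shift n ?w u j"
      using True assms by (simp add: cyclic_shift_def mult.commute)
    finally show ?thesis .
  qed (simp add: vec_mat_def cyclic_shift_def)
qed

lemma funpow_cyclic_shift_apply_eq_0_iff:
  fixes d :: "nat \<Rightarrow> 'a::field"
  assumes "\<forall>i<n. d i \<noteq> 0" and "i < n"
  shows "(cyclic_shift n d ^^ m) u ((i + m) mod n) = 0 \<longleftrightarrow> u i = 0"
proof -
  have "d ((i + l) mod n) \<noteq> 0" for l
    using assms by (simp add: mod_less_divisor)
  hence "(\<Prod>l<m. d ((i + l) mod n)) \<noteq> 0"
    by simp
  thus ?thesis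
    by (simp add: funpow_cyclic_shift_apply[OF assms(2)])
qed

lemma funpow_cyclic_shift_eq_0_iff:
  fixes d :: "nat \<Rightarrow> 'a::field"
  assumes "\<forall>i<n. d i \<noteq> 0" and "u \<in> Fvecs n"
  shows "(cyclic_shift n d ^^ m) u = 0 \<longleftrightarrow> u = 0"
proof
  assume "(cyclic_shift n d ^^ m) u = 0"
  hence "u i = 0" if "i < n" for i
    using funpow_cyclic_shift_apply_eq_0_iff[OF assms(1) that, of m u] by simp
  moreover have "u i = 0" if "\<not> i < n" for i
    using assms(2) that by (simp add: Fvecs_def)
  ultimately show "u = 0"
    by (metis zero_fun_apply ext)
next
  assume "u = 0"
  moreover have "cyclic_shift n d 0 = 0"
    by (rule ext) (simp add: cyclic_shift_def)
  ultimately show "(cyclic_shift n d ^^ m) u = 0"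
    by (induct m) simp_all
qed

lemma wt_cyclic_shift:
  fixes d :: "nat \<Rightarrow> 'a::field"
  assumes "\<forall>i<n. d i \<noteq> 0"
  shows "wt n (cyclic_shift n d u) = wt n u"
proof -
  have "{j. j < n \<and> cyclic_shift n d u j \<noteq> 0} = (\<lambda>i. Suc i mod n) ` {i. i < n \<and> u i \<noteq> 0}"
  proof (intro set_eqI iffI)
    fix j
    assume j: "j \<in> {j. j < n \<and> cyclic_shift n d u j \<noteq> 0}"
    define i where "i = (j + n - 1) mod n"
    have "i < n" and "u i \<noteq> 0"
      using j by (auto simp: cyclic_shift_def i_def)
    moreover have "j = Suc i mod n"
      using j Suc_mod_pred_mod by (simp add: i_def)
    ultimately show "j \<in> (\<lambda>i. Suc i mod n) ` {i. i < n \<and> u i \<noteq> 0}"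
      by blast
  next
    fix j
    assume "j \<in> (\<lambda>i. Suc i mod n) ` {i. i < n \<and> u i \<noteq> 0}"
    then obtain i where "i < n" and "u i \<noteq> 0" and "j = Suc i mod n"
      by blast
    thus "j \<in> {j. j < n \<and> cyclic_shift n d u j \<noteq> 0}"
      using assms by (simp add: cyclic_shift_Suc_mod)
  qed
  moreover have "inj_on (\<lambda>i. Suc i mod n) {i. i < n \<and> u i \<noteq> 0}"
    by (intro inj_on_inverseI[where g = "\<lambda>j. (j + n - 1) mod n"] pred_mod_Suc_mod) simp
  ultimately show ?thesis
    by (simp add: wt_def card_image)
qed

lemma wt_funpow_cyclic_shift:
  fixes d :: "nat \<Rightarrow> 'a::field"
  assumes "\<forall>i<n. d i \<noteq> 0"
  shows "wt n ((cyclic_shift n d ^^ m) u) = wt n u"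
  by (induct m) (simp_all add: wt_cyclic_shift[OF assms])

lemma cyclic_shift_const_eigenvector:
  fixes a :: "'a::field"
  assumes "a \<noteq> 0" and "u \<in> Fvecs n" and eigen: "cyclic_shift n (\<lambda>_. a) u = fscale a u"
  shows "u = fscale (u 0) (ones n)"
proof -
  have step: "u (Suc i) = u i" if "Suc i < n" for i
  proof -
    have "a * u (Suc i) = cyclic_shift n (\<lambda>_. a) u (Suc i mod n)"
      using that by (simp add: eigen fscale_def)
    also have "\<dots> = a * u i"
      using cyclic_shift_Suc_mod[of i n "\<lambda>_. a" u] that by simp
    finally show ?thesis
      using assms(1) by simp
  qed
  have const: "u i = u 0" if "i < n" for i
    using that
  proof (induct i)
    case (Suc i)
    thus ?case
      using step[of i] by simp
  qed simp
  show ?thesis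
  proof
    fix j
    show "u j = fscale (u 0) (ones n) j"
      using const[of j] assms(2) by (cases "j < n") (simp_all add: fscale_def ones_def Fvecs_def)
  qed
qed

lemma invariant_vanishing_coordinate_imp_zero:
  fixes d :: "nat \<Rightarrow> 'a::field"
  assumes "\<forall>i<n. d i \<noteq> 0" and "C \<subseteq> Fvecs n" and "\<forall>u\<in>C. cyclic_shift n d u \<in> C"
    and "j < n" and "\<forall>x\<in>C. x j = 0" and "x \<in> C"
  shows "x = 0"
proof
  fix i
  show "x i = 0 i"
  proof (cases "i < n")
    case True
    let ?m = "j + n - i"
    have "(cyclic_shift n d ^^ m) x \<in> C" for m
      using assms(3,6) by (induct m) auto
    hence "(cyclic_shift n d ^^ ?m) x j = 0"
      using assms(5) by blast
    moreover have "(i + ?m) mod n = j"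
      using True assms(4) by simp
    ultimately have "(cyclic_shift n d ^^ ?m) x ((i + ?m) mod n) = 0"
      by simp
    thus ?thesis
      using funpow_cyclic_shift_apply_eq_0_iff[OF assms(1) True] by simp
  qed (use assms(2,6) in \<open>auto simp: Fvecs_def\<close>)
qed

section \<open>Codes invariant under A\<close>

locale matA_setting = unit_generators eta lam for eta lam :: "'a::{finite,field}" +
  fixes p f n :: nat
  assumes prime_p: "prime p" and card_eq_prime_power: "CARD('a) = p ^ f"
    and n_eq: "n = CARD('a) + 1"
begin

definition weight :: "nat \<Rightarrow> 'a" where
  "weight i = (if i = 1 then lam else eta * lam)"

abbreviation actA :: "(nat \<Rightarrow> 'a) \<Rightarrow> nat \<Rightarrow> 'a" where
  "actA \<equiv> cyclic_shift n weight"

lemma n_pos: "0 < n"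
  by (simp add: n_eq)

lemma weight_nonzero: "\<forall>i<n. weight i \<noteq> 0"
  using eta_nonzero lam_nonzero by (simp add: weight_def)

lemma vec_mat_A: "vec_mat n u (matA n eta lam) = actA u"
  unfolding weight_def by (rule vec_mat_matA[OF n_pos])

lemma prod_weight: "(\<Prod>i<n. weight i) = lam\<^sup>2 * eta"
proof -
  have "1 \<in> {..<n}"
    using card_UNIV_field_ge_2[where 'a='a] n_eq by simp
  hence "(\<Prod>i<n. weight i) = weight 1 * (\<Prod>i\<in>{..<n} - {1}. weight i)"
    by (intro prod.remove) auto
  also have "(\<Prod>i\<in>{..<n} - {1}. weight i) = (\<Prod>i\<in>{..<n} - {1}. eta * lam)"
    by (rule prod.cong) (auto simp: weight_def)
  also have "\<dots> = (eta * lam) ^ CARD('a)"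
    using \<open>1 \<in> {..<n}\<close> n_eq by (simp add: card_Diff_singleton)
  finally show ?thesis
    by (simp add: weight_def power_card_eq_self power2_eq_square ac_simps)
qed

lemma funpow_actA_n_mult:
  assumes "u \<in> Fvecs n"
  shows "(actA ^^ (n * r)) u = fscale ((lam\<^sup>2 * eta) ^ r) u"
  using linear_cyclic_shift _ _ assms
proof (rule funpow_mult_eq_scale_power)
  show "\<forall>u\<in>Fvecs n. actA u \<in> Fvecs n"
    by (simp add: cyclic_shift_in_Fvecs)
  show "\<forall>u\<in>Fvecs n. (actA ^^ n) u = fscale (lam\<^sup>2 * eta) u"
    unfolding prod_weight[symmetric] by (simp add: funpow_cyclic_shift_n)
qed

lemma funpow_actA_eq_id_iff:
  "(\<forall>u\<in>Fvecs n. (actA ^^ j) u = u) \<longleftrightarrow> n * (CARD('a) - 1) dvd j"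
proof
  assume fixes_all: "\<forall>u\<in>Fvecs n. (actA ^^ j) u = u"
  define e :: "nat \<Rightarrow> 'a" where "e = (\<lambda>i. if i = 0 then 1 else 0)"
  have e: "e \<in> Fvecs n"
    using n_pos by (auto simp: e_def Fvecs_def)
  hence "(actA ^^ j) e ((0 + j) mod n) \<noteq> 0"
    using funpow_cyclic_shift_apply_eq_0_iff[OF weight_nonzero n_pos] by (simp add: e_def)
  hence "e (j mod n) \<noteq> 0"
    using fixes_all e by simp
  then obtain r where r: "j = n * r"
    by (auto simp: e_def split: if_splits)
  moreover have "(actA ^^ j) e = e"
    using fixes_all e by blast
  ultimately have "fscale ((lam\<^sup>2 * eta) ^ r) e = e"
    using funpow_actA_n_mult[OF e, of r] by simp
  hence "fscale ((lam\<^sup>2 * eta) ^ r) e 0 = e 0"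
    by simp
  hence "(lam\<^sup>2 * eta) ^ r = 1"
    by (simp add: e_def fscale_def)
  thus "n * (CARD('a) - 1) dvd j"
    using r lam_sq_eta_power_eq_1_imp_dvd by simp
next
  assume "n * (CARD('a) - 1) dvd j"
  then obtain r where "j = n * ((CARD('a) - 1) * r)"
    unfolding mult.assoc[symmetric] by (rule dvdE)
  moreover have "(lam\<^sup>2 * eta) ^ (CARD('a) - 1) = 1"
    using eta_nonzero lam_nonzero by (intro power_card_minus_1_eq_1) simp
  ultimately show "\<forall>u\<in>Fvecs n. (actA ^^ j) u = u"
    by (simp add: funpow_actA_n_mult power_mult fs.scale_one)
qed

lemma mat_pow_A_eq_iff:
  "mat_pow n (matA n eta lam) a = mat_pow n (matA n eta lam) b
    \<longleftrightarrow> (\<forall>u\<in>Fvecs n. (actA ^^ a) u = (actA ^^ b) u)"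
  by (simp add: mat_pow_eq_iff vec_mat_A)

lemma eigenvector_imp_even_card:
  assumes "u \<in> Fvecs n" and "u \<noteq> 0" and eigen: "actA u = fscale \<mu> u"
  shows "even CARD('a)" and "eta = 1" and "\<mu> = lam"
proof -
  have "fscale (\<mu> ^ n) u = fscale (lam\<^sup>2 * eta) u"
    using funpow_eigenvector[OF linear_cyclic_shift eigen, of n] funpow_actA_n_mult[OF assms(1), of 1]
    by simp
  hence "\<mu> ^ n = lam\<^sup>2 * eta"
    using assms(2) by simp
  moreover have "\<mu> ^ n = \<mu>\<^sup>2"
    using n_eq power_card_eq_self[of \<mu>] by (simp add: power2_eq_square)
  ultimately have square: "lam\<^sup>2 * eta = \<mu>\<^sup>2"
    by simp
  show even: "even CARD('a)"
  proof (rule ccontr)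
    assume "odd CARD('a)"
    hence "lam\<^sup>2 * eta \<noteq> \<mu>\<^sup>2"
      by (rule generator_not_square[OF _ _ lam_sq_eta_power_eq_1_imp_dvd])
        (simp add: eta_nonzero lam_nonzero)
    thus False
      using square by simp
  qed
  show "eta = 1"
    using even by (rule eta_eq_1_if_even_card)
  hence "\<mu>\<^sup>2 = lam\<^sup>2"
    using square by simp
  moreover have "(\<mu> - lam)\<^sup>2 = \<mu>\<^sup>2 - lam\<^sup>2 - 2 * lam * (\<mu> - lam)"
    by (simp add: power2_eq_square algebra_simps)
  ultimately have "(\<mu> - lam)\<^sup>2 = 0"
    using two_eq_0_if_even_card[OF prime_p card_eq_prime_power even] by simp
  thus "\<mu> = lam"
    by simp
qed

lemma funpow_actA_add_period:
  assumes "u \<in> Fvecs n" and "n * (CARD('a) - 1) dvd d"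
  shows "(actA ^^ (a + d)) u = (actA ^^ a) u"
proof -
  have "(actA ^^ d) u = u"
    using assms funpow_actA_eq_id_iff by blast
  thus ?thesis
    by (simp add: funpow_add)
qed

end

locale irreducible_matA_code = matA_setting +
  fixes C :: "(nat \<Rightarrow> 'a) set" and k :: nat
  assumes linear_code: "linear_code n k C" and k_pos: "1 \<le> k"
    and irreducible: "irreducible_code n (matA n eta lam) C"
begin

lemma code_subset: "C \<subseteq> Fvecs n"
  and code_subspace: "fs.subspace C"
  and dim_code: "fs.dim C = k"
  using linear_code by (simp_all add: linear_code_def code_dim_def)

lemma finite_code: "finite C"
  using code_subset finite_Fvecs by (rule finite_subset)

lemma actA_code: "\<forall>u\<in>C. actA u \<in> C"
  using irreducible by (simp add: irreducible_code_def invariant_def vec_mat_A)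

lemma funpow_actA_code: "u \<in> C \<Longrightarrow> (actA ^^ m) u \<in> C"
  using actA_code by (induct m) auto

lemma k_le_dim_if_invariant:
  assumes "W \<subseteq> C" and "fs.subspace W" and "\<forall>u\<in>W. actA u \<in> W" and "w \<in> W" and "w \<noteq> 0"
  shows "k \<le> fs.dim W"
proof -
  have "card {w} \<le> fs.dim W"
    using assms finite_code by (intro fs.card_le_dim_if_independent) (auto intro: finite_subset)
  moreover have "linear_code n (fs.dim W) W"
    using assms(1,2) code_subset by (auto simp: linear_code_def code_dim_def)
  moreover have "invariant n (matA n eta lam) W"
    using assms(3) by (simp add: invariant_def vec_mat_A)
  ultimately have "\<not> fs.dim W < k"
    using irreducible assms(1) dim_code by (auto simp: irreducible_code_def code_dim_def)
  thus ?thesis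
    by simp
qed

lemma code_nonzero: obtains u where "u \<in> C" and "u \<noteq> 0"
proof -
  have "\<not> C \<subseteq> {0}"
  proof
    assume "C \<subseteq> {0}"
    hence "fs.dim C \<le> card {}"
      using fs.dim_le_card[of C "{}"] by simp
    thus False
      using dim_code k_pos by simp
  qed
  thus ?thesis
    using that by blast
qed

lemma k_le_2: "k \<le> 2"
proof -
  obtain u where u: "u \<in> C" "u \<noteq> 0"
    by (rule code_nonzero)
  have power: "\<forall>u\<in>C. (actA ^^ (CARD('a) + 1)) u = fscale (lam\<^sup>2 * eta) u"
    using funpow_actA_n_mult[of _ 1] code_subset n_eq by auto
  have "lam\<^sup>2 * eta \<noteq> 0"
    using eta_nonzero lam_nonzero by simp
  then obtain v t where v: "v \<in> C" "v \<noteq> 0"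
    and quadratic: "actA (actA v) = fscale t (actA v) - fscale (lam\<^sup>2 * eta) v"
    by (rule invariant_subspace_has_quadratic_vector[OF prime_p card_eq_prime_power
        linear_cyclic_shift code_subspace actA_code _ power u])
  let ?W = "fs.span {v, actA v}"
  have "?W \<subseteq> C"
    using v actA_code code_subspace by (intro fs.span_minimal) auto
  moreover have "\<forall>x\<in>?W. actA x \<in> ?W"
    using span_pair_invariant_if_quadratic[OF linear_cyclic_shift quadratic] by blast
  ultimately have "k \<le> fs.dim ?W"
    using v by (intro k_le_dim_if_invariant) (auto intro: fs.span_base)
  also have "\<dots> \<le> card {v, actA v}"
    using fs.dim_le_card'[of "{v, actA v}"] by simp
  also have "\<dots> \<le> 2"
    by (simp add: card_insert_if)
  finally show ?thesis .
qed

lemma k_eq_1_imp: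
  assumes "k = 1"
  shows "even CARD('a)" and "C = fs.span {ones n}" and "\<forall>w\<in>C. actA w = fscale lam w"
proof -
  interpret actA: Vector_Spaces.linear fscale fscale actA
    by (rule linear_cyclic_shift)
  obtain u where u: "u \<in> C" "u \<noteq> 0"
    by (rule code_nonzero)
  have u_Fvecs: "u \<in> Fvecs n"
    using u code_subset by blast
  have C_eq: "C = fs.span {u}"
    using u assms dim_code
    by (intro fs.span_eq_if_dim_le_card[OF finite_code code_subspace, symmetric]) auto
  have "actA u \<in> fs.span {u}"
    using actA_code u(1) unfolding C_eq[symmetric] by blast
  then obtain \<mu> where eigen: "actA u = fscale \<mu> u"
    unfolding fs.span_singleton by blast
  note eigenvalue = eigenvector_imp_even_card[OF u_Fvecs u(2) eigen]
  show "even CARD('a)"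
    by (rule eigenvalue(1))
  have "weight = (\<lambda>_. lam)"
    unfolding weight_def using eigenvalue(2) by (simp add: fun_eq_iff)
  hence u_ones: "u = fscale (u 0) (ones n)"
    using eigen eigenvalue(3) by (intro cyclic_shift_const_eigenvector[OF lam_nonzero u_Fvecs]) simp
  hence "u 0 \<noteq> 0"
    using u(2) by (metis fs.scale_zero_left)
  hence "fs.span {u} = fs.span {ones n}"
    using fs.span_image_scale[of "{ones n}" "\<lambda>_. u 0"] u_ones[symmetric] by simp
  thus "C = fs.span {ones n}"
    using C_eq by simp
  show "\<forall>w\<in>C. actA w = fscale lam w"
  proof
    fix w
    assume "w \<in> C"
    then obtain a where "w = fscale a u"
      using C_eq by (auto simp: fs.span_singleton)
    thus "actA w = fscale lam w"
      using eigen eigenvalue(3) by (simp add: actA.scale fs.scale_scale mult.commute)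
  qed
qed

end

locale faithful_matA_code = irreducible_matA_code +
  assumes faithful: "faithful_code n (matA n eta lam) C"
begin

lemma pointwise_fixed_code_imp_dvd:
  assumes "\<forall>w\<in>C. (actA ^^ j) w = w"
  shows "n * (CARD('a) - 1) dvd j"
proof -
  have "\<forall>u\<in>C. vec_mat n u (mat_pow n (matA n eta lam) j) = u"
    using assms code_subset by (auto simp: vec_mat_mat_pow vec_mat_A)
  hence "mat_pow n (matA n eta lam) j = mat_pow n (matA n eta lam) 0"
    using faithful by (simp add: faithful_code_def cyc_group_def)
  hence "\<forall>u\<in>Fvecs n. (actA ^^ j) u = (actA ^^ 0) u"
    by (simp only: mat_pow_A_eq_iff)
  thus ?thesis
    by (simp add: funpow_actA_eq_id_iff)
qed

lemma k_eq_2: "k = 2"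
proof (rule ccontr)
  assume "k \<noteq> 2"
  hence "k = 1"
    using k_le_2 k_pos by simp
  hence eigen: "\<forall>w\<in>C. actA w = fscale lam w"
    by (rule k_eq_1_imp(3))
  have "(actA ^^ (CARD('a) - 1)) w = w" if "w \<in> C" for w
  proof -
    have "(actA ^^ (CARD('a) - 1)) w = fscale (lam ^ (CARD('a) - 1)) w"
      using eigen that by (intro funpow_eigenvector[OF linear_cyclic_shift]) blast
    thus ?thesis
      using power_card_minus_1_eq_1[OF lam_nonzero] by (simp add: fs.scale_one)
  qed
  hence "n * (CARD('a) - 1) dvd 1 * (CARD('a) - 1)"
    using pointwise_fixed_code_imp_dvd by simp
  hence "n * (CARD('a) - 1) \<le> 1 * (CARD('a) - 1)"
    using card_UNIV_field_ge_2[where 'a='a] by (intro dvd_imp_le) auto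
  hence "n \<le> 1"
    using card_UNIV_field_ge_2[where 'a='a] by (simp only: mult_le_cancel2)
  thus False
    using card_UNIV_field_ge_2[where 'a='a] n_eq by simp
qed

lemma code_eq_span_pair:
  assumes "a \<in> C" and "b \<in> C" and "a \<noteq> 0" and "b \<notin> fs.span {a}"
  shows "C = fs.span {b, a}"
proof -
  have "fs.independent {b, a}"
    using assms(3,4) by (rule_tac fs.independent_insertI) simp_all
  moreover have "b \<noteq> a"
    using assms(4) fs.span_base[of a "{a}"] by auto
  ultimately show ?thesis
    using assms(1,2) dim_code k_eq_2
    by (intro fs.span_eq_if_dim_le_card[OF finite_code code_subspace, symmetric]) auto
qed

lemma actA_notin_span_singleton:
  assumes "s \<in> C" and "s \<noteq> 0"
  shows "actA s \<notin> fs.span {s}"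
proof
  interpret actA: Vector_Spaces.linear fscale fscale actA
    by (rule linear_cyclic_shift)
  assume "actA s \<in> fs.span {s}"
  then obtain \<mu> where eigen: "actA s = fscale \<mu> s"
    unfolding fs.span_singleton by blast
  have "\<forall>x\<in>fs.span {s}. actA x \<in> fs.span {s}"
    using eigen by (auto simp: fs.span_singleton actA.scale fs.scale_scale)
  moreover have "fs.span {s} \<subseteq> C"
    using assms code_subspace by (intro fs.span_minimal) auto
  ultimately have "k \<le> fs.dim (fs.span {s})"
    using assms(2) by (intro k_le_dim_if_invariant) (auto intro: fs.span_base)
  moreover have "fs.dim (fs.span {s}) = 1"
    using assms(2) fs.dim_span_eq_card_independent[of "{s}"] by simp
  ultimately show False
    using k_eq_2 by simp
qed

lemma code_eq_span_orbit_pair: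
  assumes "s \<in> C" and "s \<noteq> 0"
  shows "C = fs.span {actA s, s}"
  using assms actA_code actA_notin_span_singleton[OF assms] by (intro code_eq_span_pair) auto

lemma fixed_vector_imp_dvd:
  assumes "s \<in> C" and "s \<noteq> 0" and "(actA ^^ j) s = s"
  shows "n * (CARD('a) - 1) dvd j"
proof (rule pointwise_fixed_code_imp_dvd, rule ballI)
  interpret actA_j: Vector_Spaces.linear fscale fscale "actA ^^ j"
    by (rule linear_funpow[OF linear_cyclic_shift])
  fix w
  assume "w \<in> C"
  then obtain a b where w: "w = fscale a (actA s) + fscale b s"
    using code_eq_span_orbit_pair[OF assms(1,2)] by (auto simp: fs.span_doubleton)
  have "actA ((actA ^^ j) s) = actA s"
    using assms(3) by simp
  hence "(actA ^^ j) (actA s) = actA s"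
    by (simp only: funpow_swap1)
  thus "(actA ^^ j) w = w"
    using assms(3) by (simp add: w actA_j.add actA_j.scale)
qed

lemma funpow_actA_orbit_nonzero:
  assumes "s \<in> C" and "s \<noteq> 0"
  shows "(actA ^^ m) s \<in> C - {0}"
  using funpow_actA_code[OF assms(1)] funpow_cyclic_shift_eq_0_iff[OF weight_nonzero] assms code_subset
  by blast

lemma funpow_actA_eq_imp_dvd:
  assumes "s \<in> C" and "s \<noteq> 0" and "(actA ^^ a) s = (actA ^^ b) s" and "a \<le> b"
  shows "n * (CARD('a) - 1) dvd b - a"
proof -
  have "(actA ^^ (b - a)) ((actA ^^ a) s) = (actA ^^ (b - a + a)) s"
    by (simp add: funpow_add)
  also have "\<dots> = (actA ^^ a) s"
    using assms(3,4) by simp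
  finally show ?thesis
    using funpow_actA_orbit_nonzero[OF assms(1,2), of a] by (intro fixed_vector_imp_dvd) auto
qed

lemma card_code: "card C = CARD('a) * CARD('a)"
proof -
  obtain s where s: "s \<in> C" "s \<noteq> 0"
    by (rule code_nonzero)
  show ?thesis
    using fs.card_span_doubleton[OF s(2) actA_notin_span_singleton[OF s]]
      code_eq_span_orbit_pair[OF s] by (simp add: insert_commute)
qed

lemma actA_orbit_eq:
  assumes "s \<in> C" and "s \<noteq> 0"
  shows "(\<lambda>m. (actA ^^ m) s) ` {..<n * (CARD('a) - 1)} = C - {0}"
proof (rule card_subset_eq)
  show "finite (C - {0})"
    using finite_code by simp
  show "(\<lambda>m. (actA ^^ m) s) ` {..<n * (CARD('a) - 1)} \<subseteq> C - {0}"
    by (rule image_subsetI) (rule funpow_actA_orbit_nonzero[OF assms])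
  have "inj_on (\<lambda>m. (actA ^^ m) s) {..<n * (CARD('a) - 1)}"
  proof (rule linorder_inj_onI')
    fix x y
    assume "x \<in> {..<n * (CARD('a) - 1)}" and "y \<in> {..<n * (CARD('a) - 1)}" and "x < y"
    thus "(actA ^^ x) s \<noteq> (actA ^^ y) s"
      using funpow_actA_eq_imp_dvd[OF assms, of x y] dvd_imp_le[of "n * (CARD('a) - 1)" "y - x"]
      by auto
  qed
  hence "card ((\<lambda>m. (actA ^^ m) s) ` {..<n * (CARD('a) - 1)}) = n * (CARD('a) - 1)"
    by (simp add: card_image)
  also have "\<dots> = card (C - {0})"
  proof -
    have "0 < CARD('a)"
      by (rule finite_UNIV_card_ge_0) simp
    then obtain q where q: "CARD('a) = Suc q"
      using gr0_implies_Suc by blast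
    have "card (C - {0}) = card C - 1"
      using finite_code fs.subspace_0[OF code_subspace] by (simp add: card_Diff_singleton)
    thus ?thesis
      using card_code n_eq q by simp
  qed
  finally show "card ((\<lambda>m. (actA ^^ m) s) ` {..<n * (CARD('a) - 1)}) = card (C - {0})" .
qed

lemma funpow_actA_eq_on_Fvecs:
  assumes "s \<in> C" and "s \<noteq> 0" and "(actA ^^ a) s = (actA ^^ b) s" and "u \<in> Fvecs n"
  shows "(actA ^^ a) u = (actA ^^ b) u"
proof -
  have "(actA ^^ (x + (y - x))) u = (actA ^^ x) u" if "(actA ^^ x) s = (actA ^^ y) s" and "x \<le> y"
    for x y
    by (rule funpow_actA_add_period[OF assms(4) funpow_actA_eq_imp_dvd[OF assms(1,2) that]])
  thus ?thesis
    using assms(3) by (cases "a \<le> b") (metis le_add_diff_inverse nat_le_linear)+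
qed

lemma acts_regularly: "acts_regularly n (cyc_group n (matA n eta lam)) (C - {0})"
  unfolding acts_regularly_def
proof (intro conjI ballI)
  fix g s
  assume "g \<in> cyc_group n (matA n eta lam)" and s: "s \<in> C - {0}"
  then obtain m where "g = mat_pow n (matA n eta lam) m"
    by (auto simp: cyc_group_def)
  thus "vec_mat n s g \<in> C - {0}"
    using s code_subset funpow_actA_orbit_nonzero[of s m] by (auto simp: vec_mat_mat_pow vec_mat_A)
next
  fix s t
  assume s: "s \<in> C - {0}" and t: "t \<in> C - {0}"
  have s_Fvecs: "s \<in> Fvecs n"
    using s code_subset by blast
  obtain m where m: "t = (actA ^^ m) s"
    using actA_orbit_eq[of s] s t by blast
  show "\<exists>!g. g \<in> cyc_group n (matA n eta lam) \<and> vec_mat n s g = t"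
  proof (rule ex1I[of _ "mat_pow n (matA n eta lam) m"])
    show "mat_pow n (matA n eta lam) m \<in> cyc_group n (matA n eta lam)
        \<and> vec_mat n s (mat_pow n (matA n eta lam) m) = t"
      using m s_Fvecs by (simp add: cyc_group_def vec_mat_mat_pow vec_mat_A)
  next
    fix g
    assume "g \<in> cyc_group n (matA n eta lam) \<and> vec_mat n s g = t"
    then obtain m' where g: "g = mat_pow n (matA n eta lam) m'" and "(actA ^^ m') s = (actA ^^ m) s"
      using m s_Fvecs by (auto simp: cyc_group_def vec_mat_mat_pow vec_mat_A)
    hence "\<forall>u\<in>Fvecs n. (actA ^^ m') u = (actA ^^ m) u"
      using s funpow_actA_eq_on_Fvecs by blast
    thus "g = mat_pow n (matA n eta lam) m"
      unfolding g mat_pow_A_eq_iff .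
  qed
qed

lemma code_vector_vanishing_at_0:
  obtains w where "w \<in> C" and "w \<noteq> 0" and "w 0 = 0"
proof -
  obtain s where s: "s \<in> C" "s \<noteq> 0"
    by (rule code_nonzero)
  define w where "w = fscale (actA s 0) s + fscale (- s 0) (actA s)"
  have "w \<in> C"
    unfolding w_def using s actA_code code_subspace
    by (intro fs.subspace_add fs.subspace_scale) auto
  moreover have "w 0 = 0"
    by (simp add: w_def fscale_def)
  moreover have "w \<noteq> 0" if "s 0 \<noteq> 0"
  proof
    assume "w = 0"
    hence "- s 0 = 0"
      unfolding w_def by (rule fs.scale_add_scale_eq_0_imp(2)[OF s(2) actA_notin_span_singleton[OF s]])
    thus False
      using that by simp
  qed
  ultimately show ?thesis
    using that s by (cases "s 0 = 0") auto
qed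

lemma funpow_actA_eigenvector_imp_dvd:
  assumes "w \<in> C" and "w \<noteq> 0" and eigen: "(actA ^^ j) w = fscale \<mu> w"
  shows "n dvd j"
proof -
  have "\<mu> \<noteq> 0"
    using eigen funpow_actA_orbit_nonzero[OF assms(1,2), of j] by auto
  have "(actA ^^ (j * (CARD('a) - 1))) w = ((actA ^^ j) ^^ (CARD('a) - 1)) w"
    by (simp add: funpow_mult)
  also have "\<dots> = fscale (\<mu> ^ (CARD('a) - 1)) w"
    by (rule funpow_eigenvector[OF linear_funpow[OF linear_cyclic_shift] eigen])
  also have "\<dots> = w"
    using power_card_minus_1_eq_1[OF \<open>\<mu> \<noteq> 0\<close>] by (simp add: fs.scale_one)
  finally have "n * (CARD('a) - 1) dvd j * (CARD('a) - 1)"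
    by (rule fixed_vector_imp_dvd[OF assms(1,2)])
  thus ?thesis
    using card_UNIV_field_ge_2[where 'a='a] by simp
qed

lemma code_vector_nonzero_coordinate:
  assumes "w \<in> C" and "w \<noteq> 0" and "w 0 = 0" and "0 < j" and "j < n"
  shows "w j \<noteq> 0"
proof
  assume "w j = 0"
  define v where "v = (actA ^^ j) w"
  have "v \<in> C" and "v \<noteq> 0"
    using funpow_actA_orbit_nonzero[OF assms(1,2)] by (auto simp: v_def)
  have "v j = 0"
    using funpow_cyclic_shift_apply_eq_0_iff[OF weight_nonzero n_pos, of j w] assms(3,5)
    by (simp add: v_def)
  show False
  proof (cases "v \<in> fs.span {w}")
    case True
    then obtain \<mu> where "(actA ^^ j) w = fscale \<mu> w"
      unfolding fs.span_singleton v_def by blast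
    hence "n dvd j"
      by (rule funpow_actA_eigenvector_imp_dvd[OF assms(1,2)])
    thus False
      using assms(4,5) by (auto dest: dvd_imp_le)
  next
    case False
    hence "C = fs.span {v, w}"
      using assms(1,2) \<open>v \<in> C\<close> by (rule_tac code_eq_span_pair) auto
    hence "\<forall>x\<in>C. x j = 0"
      using \<open>v j = 0\<close> \<open>w j = 0\<close> by (auto simp: fs.span_doubleton fscale_def)
    hence "w = 0"
      using invariant_vanishing_coordinate_imp_zero[OF weight_nonzero code_subset actA_code assms(5)]
        assms(1) by blast
    thus False
      using assms(2) by simp
  qed
qed

lemma equidistant: "equidistant n CARD('a) C"
proof -
  obtain w where w: "w \<in> C" "w \<noteq> 0" "w 0 = 0"
    by (rule code_vector_vanishing_at_0)
  have "{i. i < n \<and> w i \<noteq> 0} = {1..<n}"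
    using code_vector_nonzero_coordinate[OF w] w(3) by (auto simp: Suc_le_eq) (metis gr0I)
  hence "wt n w = CARD('a)"
    by (simp add: wt_def n_eq)
  show ?thesis
    unfolding equidistant_def
  proof (intro ballI impI)
    fix u
    assume "u \<in> C" and "u \<noteq> 0"
    then obtain m where "u = (actA ^^ m) w"
      using actA_orbit_eq[OF w(1,2)] by blast
    thus "wt n u = CARD('a)"
      using wt_funpow_cyclic_shift[OF weight_nonzero] \<open>wt n w = CARD('a)\<close> by simp
  qed
qed

end

theorem lemma5p2:
  fixes eta lam :: "'a::{finite,field}"
    and p f n k :: nat
    and C :: "(nat \<Rightarrow> 'a) set"
  assumes "prime p" and "CARD('a) = p ^ f"
    and "n = CARD('a) + 1"
    and "eta \<noteq> 0" and "lam \<noteq> 0"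
    and "odd (mult_ord lam)"
    and "\<exists>e. mult_ord eta = 2 ^ e"
    and "\<forall>x::'a. x \<noteq> 0 \<longrightarrow> (\<exists>a b. x = eta ^ a * lam ^ b)"
    and "linear_code n k C" and "1 \<le> k"
    and "irreducible_code n (matA n eta lam) C"
  shows "(k = 2 \<or> (k = 1 \<and> even CARD('a) \<and> C = module.span fscale {ones n}))
       \<and> (faithful_code n (matA n eta lam) C \<longrightarrow>
            acts_regularly n (cyc_group n (matA n eta lam)) (C - {0})
            \<and> linear_code n 2 C \<and> equidistant n CARD('a) C)"
proof -
  interpret irreducible_matA_code eta lam p f n C k
    by unfold_locales (use assms in auto)
  have "k = 2 \<or> (k = 1 \<and> even CARD('a) \<and> C = module.span fscale {ones n})"
    using k_le_2 k_pos k_eq_1_imp(1,2) by (cases "k = 1") auto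
  moreover have "acts_regularly n (cyc_group n (matA n eta lam)) (C - {0})
      \<and> linear_code n 2 C \<and> equidistant n CARD('a) C"
    if "faithful_code n (matA n eta lam) C"
  proof -
    interpret faithful_matA_code eta lam p f n C k
      by unfold_locales (fact that)
    show ?thesis
      using acts_regularly linear_code k_eq_2 equidistant by simp
  qed
  ultimately show ?thesis
    by blast
qed

end
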